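(* Let $(\mathfrak{Q},\&,e)$ be a non-trivial unital quantale. Consider the following full subcategories of $\mathfrak{Q}\text{-}\mathbf{FOrd}$: $\mathfrak{Q}\text{-}\mathbf{POrd}$ (objects with $|x|\in\{\bot,e\}$ for all $x$), $\mathfrak{Q}\text{-}\mathbf{Ord}$ (objects with $|x|=e$ for all $x$), $\mathbf{POrd}$ (objects with $|x|\in\{\bot,e\}$ and $\alpha(x,y)\in\{\bot,e\}$ for all $x,y$), and $\mathbf{Ord}$ (objects with $|x|=e$ and $\alpha(x,y)\in\{\bot,e\}$ for all $x,y$). Then all the inclusions $\mathbf{Ord}\subseteq\mathbf{POrd}\subseteq\mathfrak{Q}\text{-}\mathbf{POrd}$, $\mathbf{Ord}\subseteq\mathfrak{Q}\text{-}\mathbf{Ord}\subseteq\mathfrak{Q}\text{-}\mathbf{POrd}\subseteq\mathfrak{Q}\text{-}\mathbf{FOrd}$ are coreflective. Specifically: (1) $\mathbf{POrd}$ is a coreflective subcategory of $\mathfrak{Q}\text{-}\mathbf{POrd}$, with the coreflector sending each $(X,|\cdot|,\alpha)\in\mathfrak{Q}\text{-}\mathbf{POrd}$ to its underlying preorder, i.e. to $(X,|\cdot|,\alpha')$ where $\alpha'(x,y)=e$ if $|x|=|y|=e$ and $e\le\alpha(x,y)$, and $\alpha'(x,y)=\bot$ otherwise; similarly $\mathbf{Ord}$ is a coreflective subcategory of $\mathfrak{Q}\text{-}\mathbf{Ord}$ via the underlying preorder. (2) $\mathfrak{Q}\text{-}\mathbf{Ord}$ is a coreflective subcategory of $\mathfrak{Q}\text{-}\mathbf{POrd}$,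 with the coreflector sending $(X,|\cdot|,\alpha)$ to $X_{\{e\}}=\{x\in X\mid |x|=e\}$ with the inherited $\mathfrak{Q}$-preorder; in particular $\mathbf{Ord}$ is a coreflective subcategory of $\mathbf{POrd}$. (3) $\mathfrak{Q}\text{-}\mathbf{POrd}$ is a coreflective subcategory of $\mathfrak{Q}\text{-}\mathbf{FOrd}$, with the coreflector sending $(X,|\cdot|,\alpha)$ to $X_{\{e,\bot\}}=\{x\in X\mid |x|=e\text{ or }|x|=\bot\}$ with the inherited membership map and $\mathfrak{Q}$-preorder.
   Context: A unital quantale $(\mathfrak{Q},\&,e)$ is a complete lattice with an associative multiplication $\&$ with unit $e$ preserving arbitrary joins in each variable; non-trivial means $\bot<e$. Implications: $p\& q\le r\iff p\le r/ q\iff q\le p\backslash r$. A $\mathfrak{Q}$-subset is a set $X$ with a map $|\cdot|\colon X\to\mathfrak{Q}$. A $\mathfrak{Q}$-preorder on it is a map $\alpha\colon X\times X\to\mathfrak{Q}$ with, for all $x,y,z$: $(\alpha(x,y)/|x|)\&|x|=\alpha(x,y)=|y|\&(|y|\backslash\alpha(x,y))$; $|x|\le\alpha(x,x)$; $(\alpha(y,z)/|y|)\&\alpha(x,y)=\alpha(y,z)\&(|y|\backslash\alpha(x,y))\le\alpha(x,z)$. The underlying preorder of $(X,\alpha)$ is $x\le y\iff |x|=|y|$ and $|x|\le\alpha(x,y)$. $\mathfrak{Q}\text{-}\mathbf{FOrd}$ has as objects the $\mathfrak{Q}$-preordered $\mathfrak{Q}$-subsets and as morphisms $f\colon(X,\alpha)\to(Y,\beta)$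 the maps with $|fx|=|x|$ and $\alpha(x,x')\le\beta(fx,fx')$ for all $x,x'$. A full subcategory is coreflective if its inclusion functor has a right adjoint (the coreflector). *)

theory Defs
  imports Main
begin

definition unital_quantale :: "('q::complete_lattice \<Rightarrow> 'q \<Rightarrow> 'q) \<Rightarrow> 'q \<Rightarrow> bool" where
  "unital_quantale mult e \<longleftrightarrow>
     (\<forall>a b c. mult (mult a b) c = mult a (mult b c)) \<and>
     (\<forall>a. mult e a = a \<and> mult a e = a) \<and>
     (\<forall>a S. mult a (Sup S) = Sup ((\<lambda>s. mult a s) ` S)) \<and>
     (\<forall>a S. mult (Sup S) a = Sup ((\<lambda>s. mult s a) ` S))"

text \<open>Right implication r / q (with p & q \<le> r iff p \<le> r / q) and
left implication p \<setminus> r (with p & q \<le> r iff q \<le> p \<setminus> r).\<close>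

definition rdiv :: "('q::complete_lattice \<Rightarrow> 'q \<Rightarrow> 'q) \<Rightarrow> 'q \<Rightarrow> 'q \<Rightarrow> 'q" where
  "rdiv mult r q = Sup {p. mult p q \<le> r}"

definition ldiv :: "('q::complete_lattice \<Rightarrow> 'q \<Rightarrow> 'q) \<Rightarrow> 'q \<Rightarrow> 'q \<Rightarrow> 'q" where
  "ldiv mult p r = Sup {q. mult p q \<le> r}"

text \<open>An object: a carrier set X, a membership map |.| and a map alpha.
Only the values on the carrier are relevant.\<close>

record ('a, 'q) qset =
  qcarrier :: "'a set"
  qmem :: "'a \<Rightarrow> 'q"
  qrel :: "'a \<Rightarrow> 'a \<Rightarrow> 'q"

definition QFOrd :: "('q::complete_lattice \<Rightarrow> 'q \<Rightarrow> 'q) \<Rightarrow> 'q \<Rightarrow> ('a, 'q) qset \<Rightarrow> bool" where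
  "QFOrd mult e A \<longleftrightarrow>
     (\<forall>x\<in>qcarrier A. \<forall>y\<in>qcarrier A.
        mult (rdiv mult (qrel A x y) (qmem A x)) (qmem A x) = qrel A x y \<and>
        qrel A x y = mult (qmem A y) (ldiv mult (qmem A y) (qrel A x y))) \<and>
     (\<forall>x\<in>qcarrier A. qmem A x \<le> qrel A x x) \<and>
     (\<forall>x\<in>qcarrier A. \<forall>y\<in>qcarrier A. \<forall>z\<in>qcarrier A.
        mult (rdiv mult (qrel A y z) (qmem A y)) (qrel A x y)
          = mult (qrel A y z) (ldiv mult (qmem A y) (qrel A x y)) \<and>
        mult (qrel A y z) (ldiv mult (qmem A y) (qrel A x y)) \<le> qrel A x z)"

definition qhom :: "('a, 'q::complete_lattice) qset \<Rightarrow> ('b, 'q) qset \<Rightarrow> ('a \<Rightarrow> 'b) \<Rightarrow> bool" where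
  "qhom A B f \<longleftrightarrow>
     (\<forall>x\<in>qcarrier A. f x \<in> qcarrier B \<and> qmem B (f x) = qmem A x) \<and>
     (\<forall>x\<in>qcarrier A. \<forall>x'\<in>qcarrier A. qrel A x x' \<le> qrel B (f x) (f x'))"

definition QPOrd :: "('q::complete_lattice \<Rightarrow> 'q \<Rightarrow> 'q) \<Rightarrow> 'q \<Rightarrow> ('a, 'q) qset \<Rightarrow> bool" where
  "QPOrd mult e A \<longleftrightarrow> QFOrd mult e A \<and> (\<forall>x\<in>qcarrier A. qmem A x = bot \<or> qmem A x = e)"

definition QOrd :: "('q::complete_lattice \<Rightarrow> 'q \<Rightarrow> 'q) \<Rightarrow> 'q \<Rightarrow> ('a, 'q) qset \<Rightarrow> bool" where
  "QOrd mult e A \<longleftrightarrow> QFOrd mult e A \<and> (\<forall>x\<in>qcarrier A. qmem A x = e)"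

definition POrd :: "('q::complete_lattice \<Rightarrow> 'q \<Rightarrow> 'q) \<Rightarrow> 'q \<Rightarrow> ('a, 'q) qset \<Rightarrow> bool" where
  "POrd mult e A \<longleftrightarrow> QFOrd mult e A \<and> (\<forall>x\<in>qcarrier A. qmem A x = bot \<or> qmem A x = e) \<and>
     (\<forall>x\<in>qcarrier A. \<forall>y\<in>qcarrier A. qrel A x y = bot \<or> qrel A x y = e)"

definition Ord :: "('q::complete_lattice \<Rightarrow> 'q \<Rightarrow> 'q) \<Rightarrow> 'q \<Rightarrow> ('a, 'q) qset \<Rightarrow> bool" where
  "Ord mult e A \<longleftrightarrow> QFOrd mult e A \<and> (\<forall>x\<in>qcarrier A. qmem A x = e) \<and>
     (\<forall>x\<in>qcarrier A. \<forall>y\<in>qcarrier A. qrel A x y = bot \<or> qrel A x y = e)"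

text \<open>coreflects P P' A R eps B: P and P' are the same
subcategory predicate instantiated at the two carrier types; R lies in the full subcategory P, eps : R \<rightarrow> A is a
morphism, and B (an arbitrary object, of arbitrary type) has the universal property:
if B is in P then every morphism f : B \<rightarrow> A factors as eps \<circ> g for a unique
morphism g : B \<rightarrow> R (morphisms being identified when equal on the carrier).
Quantifying over all B (of all types) expresses that eps is a coreflection arrow
of A into P, i.e. the counit of a right adjoint to the inclusion.\<close>

definition coreflects ::
  "(('a, 'q::complete_lattice) qset \<Rightarrow> bool) \<Rightarrow> (('b, 'q) qset \<Rightarrow> bool) \<Rightarrow> ('a, 'q) qset \<Rightarrow> ('a, 'q) qset \<Rightarrow> ('a \<Rightarrow> 'a)
     \<Rightarrow> ('b, 'q) qset \<Rightarrow> bool" where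
  "coreflects P P' A R eps B \<longleftrightarrow> P R \<and> qhom R A eps \<and>
     (P' B \<longrightarrow> (\<forall>f. qhom B A f \<longrightarrow>
        (\<exists>g. qhom B R g \<and> (\<forall>x\<in>qcarrier B. eps (g x) = f x) \<and>
           (\<forall>g'. qhom B R g' \<and> (\<forall>x\<in>qcarrier B. eps (g' x) = f x) \<longrightarrow>
                 (\<forall>x\<in>qcarrier B. g' x = g x)))))"

definition underlying :: "'q \<Rightarrow> ('a, 'q::complete_lattice) qset \<Rightarrow> ('a, 'q) qset" where
  "underlying e A = A\<lparr>qrel := (\<lambda>x y. if qmem A x = e \<and> qmem A y = e \<and> e \<le> qrel A x y
                                        then e else bot)\<rparr>"

definition restrict_mem :: "'q set \<Rightarrow> ('a, 'q) qset \<Rightarrow> ('a, 'q) qset" where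
  "restrict_mem S A = A\<lparr>qcarrier := {x\<in>qcarrier A. qmem A x \<in> S}\<rparr>"

end

theory Submission
  imports Defs
begin

text \<open>Every coreflection arrow is the identity of the carrier, so uniqueness of the
factorisation is automatic. What remains is that the candidate object lies in the
subcategory and that every morphism into A from an object of the subcategory is already
a morphism into the candidate. For the restrictions X_S this holds because morphisms
preserve membership degrees. For the underlying preorder it holds because in a crisp
object, alpha(x,y) = e forces |x| = |y| = e: the axioms factor alpha(x,y) through |x|
and |y|, and bot annihilates.\<close>

lemma quantale_mult_bot_left: "unital_quantale mult e \<Longrightarrow> mult bot a = bot"
  unfolding unital_quantale_def by (metis Sup_empty image_empty)

lemma quantale_mult_bot_right: "unital_quantale mult e \<Longrightarrow> mult a bot = bot"
  unfolding unital_quantale_def by (metis Sup_empty image_empty)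

lemma quantale_unit: "unital_quantale mult e \<Longrightarrow> mult e a = a \<and> mult a e = a"
  unfolding unital_quantale_def by blast

lemma quantale_mult_mono:
  assumes uq: "unital_quantale mult e" and "a \<le> a'" "b \<le> b'"
  shows "mult a b \<le> mult a' b'"
proof -
  have "mult (Sup {a, a'}) b = Sup ((\<lambda>s. mult s b) ` {a, a'})"
    and "mult a' (Sup {b, b'}) = Sup ((\<lambda>s. mult a' s) ` {b, b'})"
    using uq unfolding unital_quantale_def by blast+
  then have "mult a b \<le> mult a' b" "mult a' b \<le> mult a' b'"
    using assms(2,3) by (simp_all add: sup_absorb2 le_iff_sup)
  then show ?thesis by (rule order_trans)
qed

lemma rdiv_unit: "unital_quantale mult e \<Longrightarrow> rdiv mult r e = r"
  unfolding rdiv_def by (simp add: quantale_unit Sup_atMost[unfolded atMost_def])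

lemma ldiv_unit: "unital_quantale mult e \<Longrightarrow> ldiv mult e r = r"
  unfolding ldiv_def by (simp add: quantale_unit Sup_atMost[unfolded atMost_def])

lemma QFOrd_qrel_nonbot:
  assumes uq: "unital_quantale mult e" and A: "QFOrd mult e A"
    and x: "x \<in> qcarrier A" and y: "y \<in> qcarrier A" and r: "qrel A x y \<noteq> bot"
  shows "qmem A x \<noteq> bot" and "qmem A y \<noteq> bot"
proof -
  have "mult (rdiv mult (qrel A x y) (qmem A x)) (qmem A x) = qrel A x y"
    and "qrel A x y = mult (qmem A y) (ldiv mult (qmem A y) (qrel A x y))"
    using A x y unfolding QFOrd_def by blast+
  then show "qmem A x \<noteq> bot" and "qmem A y \<noteq> bot"
    using r quantale_mult_bot_left[OF uq] quantale_mult_bot_right[OF uq] by metis+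
qed

lemma coreflects_idI:
  assumes "P R" and "qhom R A id"
    and "\<And>f. P' B \<Longrightarrow> qhom B A f \<Longrightarrow> qhom B R f"
  shows "coreflects P P' A R id B"
  using assms unfolding coreflects_def by auto

lemma restrict_mem_simps [simp]:
  "qcarrier (restrict_mem S A) = {x \<in> qcarrier A. qmem A x \<in> S}"
  "qmem (restrict_mem S A) = qmem A"
  "qrel (restrict_mem S A) = qrel A"
  unfolding restrict_mem_def by simp_all

lemma QFOrd_restrict_mem: "QFOrd mult e A \<Longrightarrow> QFOrd mult e (restrict_mem S A)"
  unfolding QFOrd_def by auto

lemma qhom_restrict_mem_id: "qhom (restrict_mem S A) A id"
  unfolding qhom_def by auto

lemma qhom_into_restrict_mem:
  "qhom B A f \<Longrightarrow> \<forall>x\<in>qcarrier B. qmem B x \<in> S \<Longrightarrow> qhom B (restrict_mem S A) f"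
  unfolding qhom_def by auto

lemma coreflects_restrict_mem:
  assumes "P (restrict_mem S A)" and "P' B \<Longrightarrow> \<forall>x\<in>qcarrier B. qmem B x \<in> S"
  shows "coreflects P P' A (restrict_mem S A) id B"
  using assms by (intro coreflects_idI qhom_restrict_mem_id qhom_into_restrict_mem) auto

lemma underlying_simps [simp]:
  "qcarrier (underlying e A) = qcarrier A"
  "qmem (underlying e A) = qmem A"
  "qrel (underlying e A) x y =
     (if qmem A x = e \<and> qmem A y = e \<and> e \<le> qrel A x y then e else bot)"
  unfolding underlying_def by simp_all

lemma underlying_trans:
  assumes uq: "unital_quantale mult e" and A: "QFOrd mult e A"
    and x: "x \<in> qcarrier A" and y: "y \<in> qcarrier A" and z: "z \<in> qcarrier A"
    and xy: "qrel (underlying e A) x y = e" and yz: "qrel (underlying e A) y z = e"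
    and nontriv: "bot < e"
  shows "qrel (underlying e A) x z = e"
proof -
  have mem: "qmem A x = e" "qmem A y = e" "qmem A z = e"
    and le: "e \<le> qrel A x y" "e \<le> qrel A y z"
    using xy yz nontriv by (auto split: if_splits)
  have "e = mult e e"
    using quantale_unit[OF uq] by simp
  also have "\<dots> \<le> mult (qrel A y z) (qrel A x y)"
    using quantale_mult_mono[OF uq le(2) le(1)] .
  also have "\<dots> = mult (qrel A y z) (ldiv mult (qmem A y) (qrel A x y))"
    using mem by (simp add: ldiv_unit[OF uq])
  also have "\<dots> \<le> qrel A x z"
    using A x y z unfolding QFOrd_def by blast
  finally have "e \<le> qrel A x z" .
  then show ?thesis using mem by simp
qed

lemma QFOrd_underlying:
  assumes uq: "unital_quantale mult e" and nontriv: "bot < e" and A: "QFOrd mult e A"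
    and crisp: "\<forall>x\<in>qcarrier A. qmem A x = bot \<or> qmem A x = e"
  shows "QFOrd mult e (underlying e A)"
proof -
  let ?U = "underlying e A"
  note unit = quantale_unit[OF uq] and divs = rdiv_unit[OF uq] ldiv_unit[OF uq]
  note annihil = quantale_mult_bot_left[OF uq] quantale_mult_bot_right[OF uq]
  have crisp_rel: "qrel ?U x y = bot \<or> qrel ?U x y = e" for x y
    by simp
  have factor: "mult (rdiv mult (qrel ?U x y) (qmem A x)) (qmem A x) = qrel ?U x y \<and>
      qrel ?U x y = mult (qmem A y) (ldiv mult (qmem A y) (qrel ?U x y))"
    if "x \<in> qcarrier A" "y \<in> qcarrier A" for x y
    using crisp that by (cases "qmem A x = e"; cases "qmem A y = e") (auto simp: unit divs annihil)
  have refl: "qmem A x \<le> qrel ?U x x" if x: "x \<in> qcarrier A" for x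
    using crisp x A unfolding QFOrd_def by auto
  have trans: "mult (rdiv mult (qrel ?U y z) (qmem A y)) (qrel ?U x y)
        = mult (qrel ?U y z) (ldiv mult (qmem A y) (qrel ?U x y)) \<and>
      mult (qrel ?U y z) (ldiv mult (qmem A y) (qrel ?U x y)) \<le> qrel ?U x z"
    if x: "x \<in> qcarrier A" and y: "y \<in> qcarrier A" and z: "z \<in> qcarrier A" for x y z
  proof (cases "qmem A y = e")
    case True
    have "mult (qrel ?U y z) (qrel ?U x y) \<le> qrel ?U x z"
      using crisp_rel[of y z] crisp_rel[of x y] underlying_trans[OF uq A x y z _ _ nontriv]
      by (auto simp: unit annihil)
    then show ?thesis using True by (simp add: divs)
  qed (simp add: annihil)
  show ?thesis
    unfolding QFOrd_def underlying_simps(1,2) using factor refl trans by blast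
qed

lemma qhom_underlying_id: "qhom (underlying e A) A id"
  unfolding qhom_def by auto

lemma qhom_into_underlying:
  assumes uq: "unital_quantale mult e" and B: "POrd mult e B" and f: "qhom B A f"
  shows "qhom B (underlying e A) f"
proof -
  have "qrel B x y \<le> qrel (underlying e A) (f x) (f y)"
    if x: "x \<in> qcarrier B" and y: "y \<in> qcarrier B" for x y
  proof (cases "qrel B x y = bot")
    case False
    then have "qrel B x y = e" and "qmem B x = e" and "qmem B y = e"
      using B QFOrd_qrel_nonbot[OF uq _ x y] unfolding POrd_def by (metis x y)+
    moreover have "qrel B x y \<le> qrel A (f x) (f y)" and "qmem A (f x) = qmem B x"
      and "qmem A (f y) = qmem B y"
      using f x y unfolding qhom_def by auto
    ultimately show ?thesis by simp
  qed simp
  then show ?thesis using f unfolding qhom_def by auto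
qed

lemma Ord_imp_POrd: "Ord mult e B \<Longrightarrow> POrd mult e B"
  unfolding Ord_def POrd_def by blast

lemma coreflects_underlying:
  assumes uq: "unital_quantale mult e"
    and P: "P (underlying e A)" and P': "\<And>B. P' B \<Longrightarrow> POrd mult e B"
  shows "coreflects P P' A (underlying e A) id B"
  using P qhom_underlying_id qhom_into_underlying[OF uq P'] by (rule coreflects_idI)

theorem theorem3p9:
  fixes mult :: "'q::complete_lattice \<Rightarrow> 'q \<Rightarrow> 'q" and e :: 'q
  assumes "unital_quantale mult e"
    and "bot < e"
  shows
    "(\<forall>(A::('a,'q) qset) (B::('b,'q) qset). QPOrd mult e A \<longrightarrow>
        coreflects (POrd mult e) (POrd mult e) A (underlying e A) id B) \<and>
     (\<forall>(A::('a,'q) qset) (B::('b,'q) qset). QOrd mult e A \<longrightarrow>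
        coreflects (Ord mult e) (Ord mult e) A (underlying e A) id B) \<and>
     (\<forall>(A::('a,'q) qset) (B::('b,'q) qset). QPOrd mult e A \<longrightarrow>
        coreflects (QOrd mult e) (QOrd mult e) A (restrict_mem {e} A) id B) \<and>
     (\<forall>(A::('a,'q) qset) (B::('b,'q) qset). POrd mult e A \<longrightarrow>
        coreflects (Ord mult e) (Ord mult e) A (restrict_mem {e} A) id B) \<and>
     (\<forall>(A::('a,'q) qset) (B::('b,'q) qset). QFOrd mult e A \<longrightarrow>
        coreflects (QPOrd mult e) (QPOrd mult e) A (restrict_mem {e, bot} A) id B)"
proof (intro conjI allI impI)
  note uq = assms(1) and nontriv = assms(2)
  fix A :: "('a,'q) qset" and B :: "('b,'q) qset"
  show "coreflects (POrd mult e) (POrd mult e) A (underlying e A) id B" if "QPOrd mult e A"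
    using that QFOrd_underlying[OF uq nontriv]
    by (intro coreflects_underlying[OF uq]) (auto simp: QPOrd_def POrd_def)
  show "coreflects (Ord mult e) (Ord mult e) A (underlying e A) id B" if "QOrd mult e A"
    using that QFOrd_underlying[OF uq nontriv]
    by (intro coreflects_underlying[OF uq] Ord_imp_POrd) (auto simp: QOrd_def Ord_def)
  show "coreflects (QOrd mult e) (QOrd mult e) A (restrict_mem {e} A) id B" if "QPOrd mult e A"
    using that QFOrd_restrict_mem[of mult e A]
    by (intro coreflects_restrict_mem) (auto simp: QPOrd_def QOrd_def)
  show "coreflects (Ord mult e) (Ord mult e) A (restrict_mem {e} A) id B" if "POrd mult e A"
    using that QFOrd_restrict_mem[of mult e A]
    by (intro coreflects_restrict_mem) (auto simp: POrd_def Ord_def)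
  show "coreflects (QPOrd mult e) (QPOrd mult e) A (restrict_mem {e, bot} A) id B"
    if "QFOrd mult e A"
    using that QFOrd_restrict_mem[of mult e A]
    by (intro coreflects_restrict_mem) (auto simp: QPOrd_def)
qed

end
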